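(* Let a product two-action game with $m$ players be given and let $\pi\in S_m$ have exactly one fixed point. Then $EC(\pi)$ has exactly two elements, and exactly one of them is a Nash equilibrium.
   Context: Fix an integer $m\ge 1$ and $\mathcal A=\{1,\dots,m\}$. A two-action game is a finite game in normal form with player set $\mathcal A$ in which each player $i$ has exactly two pure strategies $s^i_0,s^i_1$, together with utility functions $U^i:S\to\mathbb R$, where $S=\prod_{i\in\mathcal A}\{s^i_0,s^i_1\}$. A mixed strategy combination is identified with $\underline\gamma=(\gamma^1,\dots,\gamma^m)\in[0,1]^m$, where $\gamma^i$ is the probability with which player $i$ plays $s^i_1$. The expected utility $V^i$ is the multilinear extension $V^i(\underline\gamma)=\sum_{(j_1,\dots,j_m)\in\{0,1\}^m}\prod_{k=1}^m p_k(j_k)\,U^i(s^1_{j_1},\dots,s^m_{j_m})$ with $p_k(1)=\gamma^k$, $p_k(0)=1-\gamma^k$. Write $\underline\gamma^{-i}=(\gamma^j)_{j\ne i}$ and $\lambda^i(\underline\gamma^{-i}):=V^i(\underline\gamma)|_{\gamma^i=1}-V^i(\underline\gamma)|_{\gamma^i=0}$. A Nash equilibrium is a point $\underline\gamma\in[0,1]^m$ such that for every $i$: $\lambda^i(\underline\gamma^{-i})=0$ if $0<\gamma^i<1$; $\lambda^i(\underline\gamma^{-i})\le 0$ if $\gamma^i=0$; $\lambda^i(\underline\gamma^{-i})\ge 0$ if $\gamma^i=1$. For $\underline\gamma$ put $L(\underline\gamma)=\{i:\gamma^i\in\{0,1\}\}$. A two-action game is a product two-action game if there exist $\underline v=(v_1,\dots,v_m)\in\{0,1\}^m$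 and numbers $a^i_j\in(0,1)$ for $i,j\in\mathcal A$, $i\ne j$, with $a^{i_1}_j\neq a^{i_2}_j$ whenever $i_1\neq i_2$ and both differ from $j$, such that $\lambda^i(\underline\gamma^{-i})=(-1)^{v_i}\prod_{j\in\mathcal A\setminus\{i\}}(\gamma^j-a^i_j)$ for every $i\in\mathcal A$. For $\pi\in S_m$, $F(\pi)=\{i\in\mathcal A:\pi(i)=i\}$ and $EC(\pi):=\{\underline\gamma\in[0,1]^m \mid L(\underline\gamma)=F(\pi),\ \gamma^j=a^{\pi(j)}_j \text{ for all } j\notin F(\pi)\}$. *)

theory Defs
  imports Complex_Main "HOL-Library.FuncSet" "HOL-Combinatorics.Permutations"
begin

text \<open>A pure strategy profile is an extensional function
  s : {1..m} -> bool (s i = True means player i plays s^i_1).\<close>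

definition players :: "nat \<Rightarrow> nat set" where
  "players m = {1..m}"

definition pure_profiles :: "nat \<Rightarrow> (nat \<Rightarrow> bool) set" where
  "pure_profiles m = players m \<rightarrow>\<^sub>E (UNIV :: bool set)"

definition mixed_profiles :: "nat \<Rightarrow> (nat \<Rightarrow> real) set" where
  "mixed_profiles m = players m \<rightarrow>\<^sub>E {0..1}"

definition exp_util :: "nat \<Rightarrow> (nat \<Rightarrow> (nat \<Rightarrow> bool) \<Rightarrow> real) \<Rightarrow> nat \<Rightarrow> (nat \<Rightarrow> real) \<Rightarrow> real" where
  "exp_util m U i \<gamma> =
     (\<Sum>s\<in>pure_profiles m. (\<Prod>k\<in>players m. (if s k then \<gamma> k else 1 - \<gamma> k)) * U i s)"

definition lam :: "nat \<Rightarrow> (nat \<Rightarrow> (nat \<Rightarrow> bool) \<Rightarrow> real) \<Rightarrow> nat \<Rightarrow> (nat \<Rightarrow> real) \<Rightarrow> real" where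
  "lam m U i \<gamma> = exp_util m U i (\<gamma>(i := 1)) - exp_util m U i (\<gamma>(i := 0))"

definition nash_eq :: "nat \<Rightarrow> (nat \<Rightarrow> (nat \<Rightarrow> bool) \<Rightarrow> real) \<Rightarrow> (nat \<Rightarrow> real) \<Rightarrow> bool" where
  "nash_eq m U \<gamma> \<longleftrightarrow> \<gamma> \<in> mixed_profiles m \<and>
     (\<forall>i\<in>players m.
        (0 < \<gamma> i \<and> \<gamma> i < 1 \<longrightarrow> lam m U i \<gamma> = 0) \<and>
        (\<gamma> i = 0 \<longrightarrow> lam m U i \<gamma> \<le> 0) \<and>
        (\<gamma> i = 1 \<longrightarrow> lam m U i \<gamma> \<ge> 0))"

definition Lset :: "nat \<Rightarrow> (nat \<Rightarrow> real) \<Rightarrow> nat set" where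
  "Lset m \<gamma> = {i\<in>players m. \<gamma> i = 0 \<or> \<gamma> i = 1}"

definition product_game ::
  "nat \<Rightarrow> (nat \<Rightarrow> (nat \<Rightarrow> bool) \<Rightarrow> real) \<Rightarrow> (nat \<Rightarrow> nat) \<Rightarrow> (nat \<Rightarrow> nat \<Rightarrow> real) \<Rightarrow> bool" where
  "product_game m U v a \<longleftrightarrow>
     (\<forall>i\<in>players m. v i \<in> {0,1}) \<and>
     (\<forall>i\<in>players m. \<forall>j\<in>players m. i \<noteq> j \<longrightarrow> 0 < a i j \<and> a i j < 1) \<and>
     (\<forall>j\<in>players m. \<forall>i1\<in>players m. \<forall>i2\<in>players m.
        i1 \<noteq> i2 \<and> i1 \<noteq> j \<and> i2 \<noteq> j \<longrightarrow> a i1 j \<noteq> a i2 j) \<and>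
     (\<forall>i\<in>players m. \<forall>\<gamma>\<in>mixed_profiles m.
        lam m U i \<gamma> = (-1) ^ (v i) * (\<Prod>j\<in>players m - {i}. (\<gamma> j - a i j)))"

definition fixpts :: "nat \<Rightarrow> (nat \<Rightarrow> nat) \<Rightarrow> nat set" where
  "fixpts m \<pi> = {i\<in>players m. \<pi> i = i}"

definition EC :: "nat \<Rightarrow> (nat \<Rightarrow> nat \<Rightarrow> real) \<Rightarrow> (nat \<Rightarrow> nat) \<Rightarrow> (nat \<Rightarrow> real) set" where
  "EC m a \<pi> = {\<gamma>\<in>mixed_profiles m. Lset m \<gamma> = fixpts m \<pi> \<and>
                 (\<forall>j\<in>players m - fixpts m \<pi>. \<gamma> j = a (\<pi> j) j)}"

end

theory Submission
  imports Defs
begin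

text \<open>With a single fixed point \<open>k\<close>, every point of \<open>EC(\<pi>)\<close> is pinned down except for
  \<open>\<gamma>\<^sup>k \<in> {0,1}\<close>, giving two points. Every other player \<open>i = \<pi> l\<close> is indifferent there,
  because the factor \<open>\<gamma>\<^sup>l - a\<^sup>i\<^sub>l\<close> of \<open>\<lambda>\<^sup>i\<close> vanishes. Player \<open>k\<close> faces the same
  payoff difference \<open>c = \<plusminus>\<Prod>\<^bsub>l \<noteq> k\<^esub> (a\<^bsup>\<pi>(l)\<^esub>\<^sub>l - a\<^sup>k\<^sub>l)\<close> at both points, and \<open>c \<noteq> 0\<close> by the
  distinctness of the \<open>a\<^sup>i\<^sub>j\<close>; so the equilibrium is \<open>\<gamma>\<^sup>k = 0\<close> if \<open>c < 0\<close> and \<open>\<gamma>\<^sup>k = 1\<close> if \<open>c > 0\<close>.\<close>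

text \<open>The value \<open>undefined\<close> off the players makes \<open>ec_point\<close> extensional, as membership in
  \<open>mixed_profiles m\<close> and hence in \<open>EC m a \<pi>\<close> requires.\<close>

definition ec_point :: "nat \<Rightarrow> (nat \<Rightarrow> nat \<Rightarrow> real) \<Rightarrow> (nat \<Rightarrow> nat) \<Rightarrow> nat \<Rightarrow> real \<Rightarrow> nat \<Rightarrow> real" where
  "ec_point m a \<pi> k t =
     (\<lambda>j. if j \<in> players m then if j = k then t else a (\<pi> j) j else undefined)"

lemma finite_players [simp]: "finite (players m)"
  by (simp add: players_def)

lemma ec_point_in_mixed_profiles:
  assumes "t \<in> {0,1}" and "\<forall>j\<in>players m - {k}. 0 < a (\<pi> j) j \<and> a (\<pi> j) j < 1"
  shows "ec_point m a \<pi> k t \<in> mixed_profiles m"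
  using assms by (auto simp: mixed_profiles_def ec_point_def less_imp_le)

lemma ec_point_0_neq_1:
  assumes "k \<in> players m"
  shows "ec_point m a \<pi> k 0 \<noteq> ec_point m a \<pi> k 1"
proof
  assume "ec_point m a \<pi> k 0 = ec_point m a \<pi> k 1"
  then have "ec_point m a \<pi> k 0 k = ec_point m a \<pi> k 1 k" by simp
  with assms show False by (simp add: ec_point_def)
qed

lemma EC_single_fixpoint:
  assumes "fixpts m \<pi> = {k}"
    and "\<forall>j\<in>players m - {k}. 0 < a (\<pi> j) j \<and> a (\<pi> j) j < 1"
  shows "EC m a \<pi> = {ec_point m a \<pi> k 0, ec_point m a \<pi> k 1}"
proof (intro equalityI subsetI)
  fix \<gamma> assume "\<gamma> \<in> EC m a \<pi>"
  then have \<gamma>: "\<gamma> \<in> mixed_profiles m" "Lset m \<gamma> = {k}"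
    "\<forall>j\<in>players m - {k}. \<gamma> j = a (\<pi> j) j"
    by (auto simp: EC_def assms(1))
  have "\<gamma> j = undefined" if "j \<notin> players m" for j
    using \<gamma>(1) that by (auto simp: mixed_profiles_def)
  then have "\<gamma> = ec_point m a \<pi> k (\<gamma> k)"
    using \<gamma>(3) by (auto simp: ec_point_def)
  moreover have "\<gamma> k \<in> {0,1}" using \<gamma>(2) by (auto simp: Lset_def)
  ultimately show "\<gamma> \<in> {ec_point m a \<pi> k 0, ec_point m a \<pi> k 1}" by auto
next
  fix \<gamma> assume "\<gamma> \<in> {ec_point m a \<pi> k 0, ec_point m a \<pi> k 1}"
  then obtain t where t: "t \<in> {0,1}" and \<gamma>: "\<gamma> = ec_point m a \<pi> k t" by auto
  have k: "k \<in> players m" using assms(1) by (auto simp: fixpts_def)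
  have "\<gamma> j \<notin> {0,1}" if "j \<in> players m - {k}" for j
  proof -
    have "0 < a (\<pi> j) j" "a (\<pi> j) j < 1" using assms(2) that by auto
    then show ?thesis using that by (auto simp: \<gamma> ec_point_def)
  qed
  moreover have "\<gamma> k \<in> {0,1}" using t k by (simp add: \<gamma> ec_point_def)
  ultimately have "Lset m \<gamma> = {k}" using k unfolding Lset_def by blast
  moreover have "\<gamma> \<in> mixed_profiles m"
    unfolding \<gamma> using t assms(2) by (rule ec_point_in_mixed_profiles)
  ultimately show "\<gamma> \<in> EC m a \<pi>" by (auto simp: EC_def assms(1) \<gamma> ec_point_def)
qed

lemma product_game_lam:
  assumes "product_game m U v a" and "i \<in> players m" and "\<gamma> \<in> mixed_profiles m"
  shows "lam m U i \<gamma> = (-1) ^ v i * (\<Prod>j\<in>players m - {i}. \<gamma> j - a i j)"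
  using assms by (auto simp: product_game_def)

lemma product_game_lam_eq_0:
  assumes "product_game m U v a" and "i \<in> players m" and "\<gamma> \<in> mixed_profiles m"
    and "l \<in> players m" "l \<noteq> i" "\<gamma> l = a i l"
  shows "lam m U i \<gamma> = 0"
proof -
  have "(\<Prod>j\<in>players m - {i}. \<gamma> j - a i j) = 0"
    using assms(4-6) by (intro prod_zero) auto
  then show ?thesis by (simp add: product_game_lam[OF assms(1-3)])
qed

lemma nash_eq_iff_others_indifferent:
  assumes "\<gamma> \<in> mixed_profiles m" and "k \<in> players m"
    and "\<forall>i\<in>players m - {k}. lam m U i \<gamma> = 0"
  shows "nash_eq m U \<gamma> \<longleftrightarrow>
    (0 < \<gamma> k \<and> \<gamma> k < 1 \<longrightarrow> lam m U k \<gamma> = 0) \<and>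
    (\<gamma> k = 0 \<longrightarrow> lam m U k \<gamma> \<le> 0) \<and> (\<gamma> k = 1 \<longrightarrow> lam m U k \<gamma> \<ge> 0)"
proof -
  have "(\<forall>i\<in>players m. P i) \<longleftrightarrow> P k \<and> (\<forall>i\<in>players m - {k}. P i)" for P
    using assms(2) by blast
  then show ?thesis
    using assms(1,3) unfolding nash_eq_def by simp
qed

lemma permutes_single_fixpoint_moves:
  assumes "\<pi> permutes players m" and "fixpts m \<pi> = {k}" and "j \<in> players m" "j \<noteq> k"
  shows "\<pi> j \<in> players m" "\<pi> j \<noteq> j" "\<pi> j \<noteq> k"
proof -
  show "\<pi> j \<in> players m" using assms(1,3) by (simp add: permutes_in_image)
  show "\<pi> j \<noteq> j" using assms(2-4) by (auto simp: fixpts_def)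
  have "\<pi> k = k" using assms(2) by (auto simp: fixpts_def)
  then show "\<pi> j \<noteq> k" using assms(1,4) by (metis permutes_inj injD)
qed

lemma product_game_ec_point_bounds:
  assumes "product_game m U v a" and "\<pi> permutes players m" and "fixpts m \<pi> = {k}"
  shows "\<forall>j\<in>players m - {k}. 0 < a (\<pi> j) j \<and> a (\<pi> j) j < 1"
  using assms permutes_single_fixpoint_moves[OF assms(2,3)] by (auto simp: product_game_def)

lemma product_game_lam_ec_point_moved:
  assumes "product_game m U v a" and "\<pi> permutes players m" and "fixpts m \<pi> = {k}"
    and "t \<in> {0,1}" and "i \<in> players m" "i \<noteq> k"
  shows "lam m U i (ec_point m a \<pi> k t) = 0"
proof -
  define l where "l = inv \<pi> i"
  have "\<pi> l = i" and l: "l \<in> players m"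
    using assms(2,5) by (simp_all add: l_def permutes_inverses(1) permutes_in_image permutes_inv)
  moreover have "l \<noteq> k" using \<open>\<pi> l = i\<close> assms(3,6) by (auto simp: fixpts_def)
  ultimately have "l \<noteq> i" using permutes_single_fixpoint_moves(2)[OF assms(2,3) l] by auto
  show ?thesis
  proof (rule product_game_lam_eq_0[OF assms(1,5) _ l \<open>l \<noteq> i\<close>])
    show "ec_point m a \<pi> k t \<in> mixed_profiles m"
      using assms(4) product_game_ec_point_bounds[OF assms(1-3)] by (rule ec_point_in_mixed_profiles)
    show "ec_point m a \<pi> k t l = a i l"
      using l \<open>l \<noteq> k\<close> \<open>\<pi> l = i\<close> by (simp add: ec_point_def)
  qed
qed

lemma product_game_lam_ec_point_fixed:
  assumes "product_game m U v a" and "\<pi> permutes players m" and "fixpts m \<pi> = {k}"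
    and "t \<in> {0,1}"
  shows "lam m U k (ec_point m a \<pi> k t) = (-1) ^ v k * (\<Prod>l\<in>players m - {k}. a (\<pi> l) l - a k l)"
proof -
  have "k \<in> players m" using assms(3) by (auto simp: fixpts_def)
  moreover have "ec_point m a \<pi> k t \<in> mixed_profiles m"
    using assms(4) product_game_ec_point_bounds[OF assms(1-3)] by (rule ec_point_in_mixed_profiles)
  ultimately show ?thesis
    using assms(1) by (simp add: product_game_lam) (auto simp: ec_point_def intro!: prod.cong)
qed

lemma product_game_single_fixpoint_prod_nonzero:
  assumes "product_game m U v a" and "\<pi> permutes players m" and "fixpts m \<pi> = {k}"
  shows "(\<Prod>l\<in>players m - {k}. a (\<pi> l) l - a k l) \<noteq> 0"
proof -
  have "k \<in> players m" using assms(3) by (auto simp: fixpts_def)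
  have distinct: "\<forall>j\<in>players m. \<forall>i\<^sub>1\<in>players m. \<forall>i\<^sub>2\<in>players m.
      i\<^sub>1 \<noteq> i\<^sub>2 \<and> i\<^sub>1 \<noteq> j \<and> i\<^sub>2 \<noteq> j \<longrightarrow> a i\<^sub>1 j \<noteq> a i\<^sub>2 j"
    using assms(1) by (simp add: product_game_def)
  have "a (\<pi> l) l \<noteq> a k l" if "l \<in> players m - {k}" for l
  proof -
    have l: "l \<in> players m" "l \<noteq> k" using that by auto
    note moves = permutes_single_fixpoint_moves[OF assms(2,3) l]
    show ?thesis
      using l moves by (intro distinct[rule_format, OF l(1) moves(1) \<open>k \<in> players m\<close>]) auto
  qed
  then show ?thesis by simp
qed

theorem theorem3p7:
  fixes m :: nat and U :: "nat \<Rightarrow> (nat \<Rightarrow> bool) \<Rightarrow> real"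
    and v :: "nat \<Rightarrow> nat" and a :: "nat \<Rightarrow> nat \<Rightarrow> real" and \<pi> :: "nat \<Rightarrow> nat"
  assumes "m \<ge> 1"
    and "product_game m U v a"
    and "\<pi> permutes players m"
    and "card (fixpts m \<pi>) = 1"
  shows "card (EC m a \<pi>) = 2 \<and> card {\<gamma>\<in>EC m a \<pi>. nash_eq m U \<gamma>} = 1"
proof -
  obtain k where k: "fixpts m \<pi> = {k}" using assms(4) card_1_singletonE by blast
  then have "k \<in> players m" by (auto simp: fixpts_def)
  let ?\<gamma> = "ec_point m a \<pi> k"
  define c where "c = (-1) ^ v k * (\<Prod>l\<in>players m - {k}. a (\<pi> l) l - a k l)"
  note bounds = product_game_ec_point_bounds[OF assms(2,3) k]
  have EC: "EC m a \<pi> = {?\<gamma> 0, ?\<gamma> 1}" using k bounds by (rule EC_single_fixpoint)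
  have "c \<noteq> 0"
    using product_game_single_fixpoint_prod_nonzero[OF assms(2,3) k] by (simp add: c_def)
  have nash: "nash_eq m U (?\<gamma> t) \<longleftrightarrow> (t = 0 \<longrightarrow> c \<le> 0) \<and> (t = 1 \<longrightarrow> c \<ge> 0)"
    if t: "t \<in> {0,1}" for t
  proof -
    have "?\<gamma> t \<in> mixed_profiles m" using t bounds by (rule ec_point_in_mixed_profiles)
    moreover have "\<forall>i\<in>players m - {k}. lam m U i (?\<gamma> t) = 0"
      using product_game_lam_ec_point_moved[OF assms(2,3) k t] by blast
    ultimately have "nash_eq m U (?\<gamma> t) \<longleftrightarrow>
        (0 < t \<and> t < 1 \<longrightarrow> c = 0) \<and> (t = 0 \<longrightarrow> c \<le> 0) \<and> (t = 1 \<longrightarrow> c \<ge> 0)"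
      using nash_eq_iff_others_indifferent[OF _ \<open>k \<in> players m\<close>] \<open>k \<in> players m\<close>
        product_game_lam_ec_point_fixed[OF assms(2,3) k t]
      by (simp add: c_def ec_point_def)
    then show ?thesis using t by auto
  qed
  have "{\<gamma>\<in>EC m a \<pi>. nash_eq m U \<gamma>} = (if c < 0 then {?\<gamma> 0} else {?\<gamma> 1})"
  proof (cases "c < 0")
    case True
    then show ?thesis using nash[of 0] nash[of 1] by (auto simp: EC)
  next
    case False
    with \<open>c \<noteq> 0\<close> show ?thesis using nash[of 0] nash[of 1] by (auto simp: EC)
  qed
  then show ?thesis using EC ec_point_0_neq_1[OF \<open>k \<in> players m\<close>] by simp
qed

end
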